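(* Let $(X,d,\ll,\le,\tau)$ and $(Y,\widetilde d,\widetilde\ll,\widetilde\le,\widetilde\tau)$ be Lorentzian length spaces and let $f:X\to Y$ be a surjective distance homothetic map that is locally causally Lipschitz. If $(X,d,\ll,\le,\tau)$ is strongly causal and $(Y,\widetilde d)$ is locally compact, then $f$ sends maximal causal curves in $X$ to maximal causal curves in $Y$: if $x\le y$ and $\gamma:[a,b]\to X$ is a future directed causal curve from $x$ to $y$ with $L_\tau(\gamma)=\tau(x,y)$, then $f\circ\gamma$ is a future directed causal curve from $f(x)$ to $f(y)$ with $L_{\widetilde\tau}(f\circ\gamma)=\widetilde\tau(f(x),f(y))$.
   Context: A causal space $(X,\ll,\le)$ is a set $X$ with two transitive relations $\ll,\le$ such that $\le$ is reflexive and $x\ll y\Rightarrow x\le y$; write $p<q$ if $p\le q$ and $p\neq q$. Set $I^+(x)=\{y: x\ll y\}$, $I^-(x)=\{y: y\ll x\}$, $J^+(x)=\{y:x\le y\}$, $J^-(x)=\{y:y\le x\}$. A Lorentzian pre-length space $(X,d,\ll,\le,\tau)$ is a causal space together with a metric $d$ on $X$ and a function $\tau:X\times X\to[0,\infty]$ that is lower semicontinuous with respect to the topology of $d$, satisfies $\tau(x,z)\ge\tau(x,y)+\tau(y,z)$ whenever $x\le y\le z$, $\tau(x,y)=0$ if $x\not\le y$, and $\tau(x,y)>0\iff x\ll y$. All topological notions refer to the metric topology of $d$. A future directed causal (resp. timelike) curve is a non-constant Lipschitz map $\gamma:I\to X$ ($I\subset\mathbb R$ an interval) with $\gamma(s)\le\gamma(t)$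 (resp. $\gamma(s)\ll\gamma(t)$) for all $s<t$. For a future directed causal $\gamma:[a,b]\to X$, $L_\tau(\gamma)=\inf\sum_{i=0}^{N-1}\tau(\gamma(t_i),\gamma(t_{i+1}))$ over all partitions $a=t_0<\dots<t_N=b$. The space is causally path connected if whenever $x\le y$ (resp. $x\ll y$) there is a future directed causal (resp. timelike) curve from $x$ to $y$. For open $U\subset X$, $p\le_U q$ means there is a future directed causal curve from $p$ to $q$ with image in $U$. A neighborhood $U$ is causally closed if whenever $p_n\le_U q_n$ with $p_n\to p\in U$, $q_n\to q\in U$, then $p\le_U q$; the space is locally causally closed if every point has a causally closed neighborhood. The space is localizable if every $x$ has a neighborhood $\Omega_x$ such that: (i) all causal curves contained in $\Omega_x$ have uniformly bounded $d$-length; (ii) there is a continuous $\omega_x:\Omega_x\times\Omega_x\to[0,\infty)$ such that $(\Omega_x,d|_{\Omega_x\times\Omega_x},\ll|_{\Omega_x},\le|_{\Omega_x},\omega_x)$ is a Lorentzian pre-length space, and $I^\pm(y)\cap\Omega_x\ne\emptyset$ for every $y\in\Omega_x$; (iii) for all $p,q\in\Omega_x$ with $p<q$ there is a future causal curve $\gamma_{p,q}$ from $p$ to $q$ with $L_\tau(\gamma_{p,q})\ge L_\tau(\gamma)$ for every future causal curve $\gamma\subset\Omega_x$ from $p$ to $q$, and $L_\tau(\gamma_{p,q})=\omega_x(p,q)$. A Lorentzian length space is a causally path connected, locally causally closed, localizable Lorentzian pre-length space with $\tau(x,y)=\sup\{L_\tau(\gamma):\gamma$ a future causal curve from $x$ to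 $y\}$. Strongly causal: the Alexandrov topology (subbase $\{I^+(x)\cap I^-(y)\}$) coincides with the metric topology. A map $f:X\to Y$ is distance homothetic if there is $c>0$ with $\widetilde\tau(f(p),f(q))=c\,\tau(p,q)$ for all $p,q\in X$; it is locally causally Lipschitz if for every $x\in X$ there are an open $U\ni x$ and $M>0$ with $\widetilde d(f(x_1),f(x_2))\le M\,d(x_1,x_2)$ for all $x_1,x_2\in U$ with $x_1\le x_2$. A future directed causal curve $\gamma$ from $x$ to $y$ is maximal if $L_\tau(\gamma)=\tau(x,y)$. *)

theory Defs
  imports "HOL-Analysis.Analysis"
begin

abbreviation mtop :: "'a set \<Rightarrow> ('a \<Rightarrow> 'a \<Rightarrow> real) \<Rightarrow> 'a topology" where
  "mtop S d \<equiv> Metric_space.mtopology S d"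

definition causal_space :: "'a set \<Rightarrow> ('a \<Rightarrow> 'a \<Rightarrow> bool) \<Rightarrow> ('a \<Rightarrow> 'a \<Rightarrow> bool) \<Rightarrow> bool" where
  "causal_space S ll le \<longleftrightarrow>
     (\<forall>x\<in>S. \<forall>y\<in>S. \<forall>z\<in>S. ll x y \<and> ll y z \<longrightarrow> ll x z) \<and>
     (\<forall>x\<in>S. \<forall>y\<in>S. \<forall>z\<in>S. le x y \<and> le y z \<longrightarrow> le x z) \<and>
     (\<forall>x\<in>S. le x x) \<and>
     (\<forall>x\<in>S. \<forall>y\<in>S. ll x y \<longrightarrow> le x y)"

definition lpls :: "'a set \<Rightarrow> ('a \<Rightarrow> 'a \<Rightarrow> real) \<Rightarrow> ('a \<Rightarrow> 'a \<Rightarrow> bool) \<Rightarrow> ('a \<Rightarrow> 'a \<Rightarrow> bool)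
                     \<Rightarrow> ('a \<Rightarrow> 'a \<Rightarrow> ennreal) \<Rightarrow> bool" where
  "lpls S d ll le tau \<longleftrightarrow>
     Metric_space S d \<and> causal_space S ll le \<and>
     (\<forall>r. openin (prod_topology (mtop S d) (mtop S d)) {(x, y). x \<in> S \<and> y \<in> S \<and> r < tau x y}) \<and>
     (\<forall>x\<in>S. \<forall>y\<in>S. \<forall>z\<in>S. le x y \<and> le y z \<longrightarrow> tau x z \<ge> tau x y + tau y z) \<and>
     (\<forall>x\<in>S. \<forall>y\<in>S. \<not> le x y \<longrightarrow> tau x y = 0) \<and>
     (\<forall>x\<in>S. \<forall>y\<in>S. tau x y > 0 \<longleftrightarrow> ll x y)"

definition lipschitz_curve :: "('a \<Rightarrow> 'a \<Rightarrow> real) \<Rightarrow> real \<Rightarrow> real \<Rightarrow> (real \<Rightarrow> 'a) \<Rightarrow> bool" where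
  "lipschitz_curve d a b \<gamma> \<longleftrightarrow>
     (\<exists>L. \<forall>s\<in>{a..b}. \<forall>t\<in>{a..b}. d (\<gamma> s) (\<gamma> t) \<le> L * \<bar>s - t\<bar>)"

text \<open>Future directed causal (resp. timelike, with rel = ll) curve on [a,b]: non-constant,
  Lipschitz, and rel (gamma s) (gamma t) for s < t.\<close>
definition fd_curve :: "('a \<Rightarrow> 'a \<Rightarrow> real) \<Rightarrow> ('a \<Rightarrow> 'a \<Rightarrow> bool) \<Rightarrow> real \<Rightarrow> real \<Rightarrow> (real \<Rightarrow> 'a) \<Rightarrow> bool" where
  "fd_curve d rel a b \<gamma> \<longleftrightarrow> a < b \<and> lipschitz_curve d a b \<gamma> \<and>
     (\<exists>s\<in>{a..b}. \<exists>t\<in>{a..b}. \<gamma> s \<noteq> \<gamma> t) \<and>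
     (\<forall>s\<in>{a..b}. \<forall>t\<in>{a..b}. s < t \<longrightarrow> rel (\<gamma> s) (\<gamma> t))"

definition curve_from_to :: "('a \<Rightarrow> 'a \<Rightarrow> real) \<Rightarrow> ('a \<Rightarrow> 'a \<Rightarrow> bool) \<Rightarrow> real \<Rightarrow> real \<Rightarrow> (real \<Rightarrow> 'a)
                           \<Rightarrow> 'a \<Rightarrow> 'a \<Rightarrow> bool" where
  "curve_from_to d rel a b \<gamma> x y \<longleftrightarrow> fd_curve d rel a b \<gamma> \<and> \<gamma> a = x \<and> \<gamma> b = y"

definition partitions :: "real \<Rightarrow> real \<Rightarrow> (nat \<times> (nat \<Rightarrow> real)) set" where
  "partitions a b = {(N, t). N > 0 \<and> t 0 = a \<and> t N = b \<and> (\<forall>i<N. t i < t (Suc i))}"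

definition Ltau :: "('a \<Rightarrow> 'a \<Rightarrow> ennreal) \<Rightarrow> real \<Rightarrow> real \<Rightarrow> (real \<Rightarrow> 'a) \<Rightarrow> ennreal" where
  "Ltau tau a b \<gamma> = (INF (N, t)\<in>partitions a b. \<Sum>i<N. tau (\<gamma> (t i)) (\<gamma> (t (Suc i))))"

definition dlength :: "('a \<Rightarrow> 'a \<Rightarrow> real) \<Rightarrow> real \<Rightarrow> real \<Rightarrow> (real \<Rightarrow> 'a) \<Rightarrow> ennreal" where
  "dlength d a b \<gamma> = (SUP (N, t)\<in>partitions a b. \<Sum>i<N. ennreal (d (\<gamma> (t i)) (\<gamma> (t (Suc i)))))"

definition causally_path_connected :: "('a \<Rightarrow> 'a \<Rightarrow> real) \<Rightarrow> ('a \<Rightarrow> 'a \<Rightarrow> bool) \<Rightarrow> ('a \<Rightarrow> 'a \<Rightarrow> bool) \<Rightarrow> bool" where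
  "causally_path_connected d ll le \<longleftrightarrow>
     (\<forall>x y. le x y \<and> x \<noteq> y \<longrightarrow> (\<exists>a b \<gamma>. curve_from_to d le a b \<gamma> x y)) \<and>
     (\<forall>x y. ll x y \<longrightarrow> (\<exists>a b \<gamma>. curve_from_to d ll a b \<gamma> x y))"

text \<open>p \<le>_U q (taken reflexive: p = q or a causal curve in U from p to q).\<close>
definition le_in :: "('a \<Rightarrow> 'a \<Rightarrow> real) \<Rightarrow> ('a \<Rightarrow> 'a \<Rightarrow> bool) \<Rightarrow> 'a set \<Rightarrow> 'a \<Rightarrow> 'a \<Rightarrow> bool" where
  "le_in d le U p q \<longleftrightarrow> p = q \<or>
     (\<exists>a b \<gamma>. curve_from_to d le a b \<gamma> p q \<and> \<gamma> ` {a..b} \<subseteq> U)"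

definition causally_closed :: "('a \<Rightarrow> 'a \<Rightarrow> real) \<Rightarrow> ('a \<Rightarrow> 'a \<Rightarrow> bool) \<Rightarrow> 'a set \<Rightarrow> bool" where
  "causally_closed d le U \<longleftrightarrow>
     (\<forall>p q ps qs. (\<forall>n. le_in d le U (ps n) (qs n)) \<and> p \<in> U \<and> q \<in> U \<and>
        limitin (mtop UNIV d) ps p sequentially \<and> limitin (mtop UNIV d) qs q sequentially
        \<longrightarrow> le_in d le U p q)"

definition locally_causally_closed :: "('a \<Rightarrow> 'a \<Rightarrow> real) \<Rightarrow> ('a \<Rightarrow> 'a \<Rightarrow> bool) \<Rightarrow> bool" where
  "locally_causally_closed d le \<longleftrightarrow>
     (\<forall>x. \<exists>U. openin (mtop UNIV d) U \<and> x \<in> U \<and> causally_closed d le U)"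

definition localizable :: "('a \<Rightarrow> 'a \<Rightarrow> real) \<Rightarrow> ('a \<Rightarrow> 'a \<Rightarrow> bool) \<Rightarrow> ('a \<Rightarrow> 'a \<Rightarrow> bool)
                           \<Rightarrow> ('a \<Rightarrow> 'a \<Rightarrow> ennreal) \<Rightarrow> bool" where
  "localizable d ll le tau \<longleftrightarrow>
     (\<forall>x. \<exists>\<Omega> V. openin (mtop UNIV d) V \<and> x \<in> V \<and> V \<subseteq> \<Omega> \<and>
        \<comment> \<open>(i)\<close>
        (\<exists>C::real. \<forall>a b \<gamma>. fd_curve d le a b \<gamma> \<and> \<gamma> ` {a..b} \<subseteq> \<Omega> \<longrightarrow> dlength d a b \<gamma> \<le> ennreal C) \<and>
        \<comment> \<open>(ii)\<close>
        (\<exists>\<omega> :: 'a \<Rightarrow> 'a \<Rightarrow> real.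
           (\<forall>p\<in>\<Omega>. \<forall>q\<in>\<Omega>. \<omega> p q \<ge> 0) \<and>
           continuous_map (subtopology (prod_topology (mtop UNIV d) (mtop UNIV d)) (\<Omega> \<times> \<Omega>))
                          euclideanreal (\<lambda>(p, q). \<omega> p q) \<and>
           lpls \<Omega> d ll le (\<lambda>p q. ennreal (\<omega> p q)) \<and>
           (\<forall>y\<in>\<Omega>. (\<exists>z\<in>\<Omega>. ll y z) \<and> (\<exists>z\<in>\<Omega>. ll z y)) \<and>
        \<comment> \<open>(iii)\<close>
           (\<forall>p\<in>\<Omega>. \<forall>q\<in>\<Omega>. le p q \<and> p \<noteq> q \<longrightarrow>
              (\<exists>a b \<gamma>. curve_from_to d le a b \<gamma> p q \<and>
                 (\<forall>a' b' \<gamma>'. curve_from_to d le a' b' \<gamma>' p q \<and> \<gamma>' ` {a'..b'} \<subseteq> \<Omega>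
                     \<longrightarrow> Ltau tau a' b' \<gamma>' \<le> Ltau tau a b \<gamma>) \<and>
                 Ltau tau a b \<gamma> = ennreal (\<omega> p q)))))"

definition lorentzian_length_space :: "('a \<Rightarrow> 'a \<Rightarrow> real) \<Rightarrow> ('a \<Rightarrow> 'a \<Rightarrow> bool) \<Rightarrow> ('a \<Rightarrow> 'a \<Rightarrow> bool)
                                        \<Rightarrow> ('a \<Rightarrow> 'a \<Rightarrow> ennreal) \<Rightarrow> bool" where
  "lorentzian_length_space d ll le tau \<longleftrightarrow>
     lpls UNIV d ll le tau \<and> causally_path_connected d ll le \<and>
     locally_causally_closed d le \<and> localizable d ll le tau \<and>
     (\<forall>x y. tau x y = (SUP (a, b, \<gamma>)\<in>{(a, b, \<gamma>). curve_from_to d le a b \<gamma> x y}. Ltau tau a b \<gamma>))"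

definition strongly_causal :: "('a \<Rightarrow> 'a \<Rightarrow> real) \<Rightarrow> ('a \<Rightarrow> 'a \<Rightarrow> bool) \<Rightarrow> bool" where
  "strongly_causal d ll \<longleftrightarrow>
     topology_generated_by {{z. ll x z} \<inter> {z. ll z y} | x y. True} = mtop UNIV d"

definition distance_homothetic :: "('a \<Rightarrow> 'a \<Rightarrow> ennreal) \<Rightarrow> ('b \<Rightarrow> 'b \<Rightarrow> ennreal) \<Rightarrow> ('a \<Rightarrow> 'b) \<Rightarrow> bool" where
  "distance_homothetic tau tau' f \<longleftrightarrow>
     (\<exists>c::real. c > 0 \<and> (\<forall>p q. tau' (f p) (f q) = ennreal c * tau p q))"

definition locally_causally_lipschitz :: "('a \<Rightarrow> 'a \<Rightarrow> real) \<Rightarrow> ('a \<Rightarrow> 'a \<Rightarrow> bool) \<Rightarrow> ('b \<Rightarrow> 'b \<Rightarrow> real)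
                                          \<Rightarrow> ('a \<Rightarrow> 'b) \<Rightarrow> bool" where
  "locally_causally_lipschitz d le d' f \<longleftrightarrow>
     (\<forall>x. \<exists>U M. openin (mtop UNIV d) U \<and> x \<in> U \<and> M > 0 \<and>
        (\<forall>x1\<in>U. \<forall>x2\<in>U. le x1 x2 \<longrightarrow> d' (f x1) (f x2) \<le> M * d x1 x2))"

end

(* Since tau' (f p) (f q) = c * tau p q with c > 0, the map f preserves the chronological
   relation and multiplies the tau-length of every curve by c, so maximality of f o gamma is
   immediate. The work is to show that f o gamma is a causal curve at all: f is not assumed to
   preserve the causal relation.

   Strong causality provides causally convex neighbourhoods inside chronological diamonds. On such
   a neighbourhood C, small enough that f is Lipschitz on causal pairs and maps C into a causally
   closed neighbourhood U in Y, every p <= q is a limit of pairs p << q_n; timelike curves from p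
   to q_n stay in C, are pushed forward to causal curves in U, and causal closedness of U gives
   f p <= f q. A Lebesgue number for the curve turns these local estimates into a global causal
   Lipschitz bound for f o gamma, and f is injective because strongly causal spaces are
   distinguishing, so f o gamma is not constant. *)

theory Submission
  imports Defs
begin

lemma lls_lpls: "lorentzian_length_space d ll le tau \<Longrightarrow> lpls UNIV d ll le tau"
  and lls_causally_path_connected:
    "lorentzian_length_space d ll le tau \<Longrightarrow> causally_path_connected d ll le"
  and lls_locally_causally_closed:
    "lorentzian_length_space d ll le tau \<Longrightarrow> locally_causally_closed d le"
  and lls_localizable: "lorentzian_length_space d ll le tau \<Longrightarrow> localizable d ll le tau"
  by (simp_all add: lorentzian_length_space_def)

lemma
  assumes "lpls UNIV d ll le tau"
  shows lpls_metric: "Metric_space UNIV d"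
    and lpls_le_refl: "le x x"
    and lpls_le_trans: "le x y \<Longrightarrow> le y z \<Longrightarrow> le x z"
    and lpls_ll_imp_le: "ll x y \<Longrightarrow> le x y"
    and lpls_reverse_triangle: "le x y \<Longrightarrow> le y z \<Longrightarrow> tau x y + tau y z \<le> tau x z"
    and lpls_tau_pos_iff: "0 < tau x y \<longleftrightarrow> ll x y"
proof -
  have "causal_space UNIV ll le"
    and "\<forall>x\<in>UNIV. \<forall>y\<in>UNIV. \<forall>z\<in>UNIV. le x y \<and> le y z \<longrightarrow> tau x z \<ge> tau x y + tau y z"
        "\<forall>x\<in>UNIV. \<forall>y\<in>UNIV. tau x y > 0 \<longleftrightarrow> ll x y"
    using assms unfolding lpls_def by simp_all
  then show "le x x" "le x y \<Longrightarrow> le y z \<Longrightarrow> le x z" "ll x y \<Longrightarrow> le x y"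
    "le x y \<Longrightarrow> le y z \<Longrightarrow> tau x y + tau y z \<le> tau x z" "0 < tau x y \<longleftrightarrow> ll x y"
    unfolding causal_space_def by blast+
  show "Metric_space UNIV d" using assms unfolding lpls_def by simp
qed

lemma lpls_le_ll_trans:
  assumes X: "lpls UNIV d ll le tau" and "le x y" "ll y z"
  shows "ll x z"
proof -
  have "tau y z \<le> tau x y + tau y z" by simp
  also have "\<dots> \<le> tau x z"
    using assms lpls_reverse_triangle[OF X] lpls_ll_imp_le[OF X] by blast
  finally show ?thesis
    using assms lpls_tau_pos_iff[OF X] by (metis order_less_le_trans)
qed

lemma lpls_ll_le_trans:
  assumes X: "lpls UNIV d ll le tau" and "ll x y" "le y z"
  shows "ll x z"
proof -
  have "tau x y \<le> tau x y + tau y z" by simp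
  also have "\<dots> \<le> tau x z"
    using assms lpls_reverse_triangle[OF X] lpls_ll_imp_le[OF X] by blast
  finally show ?thesis
    using assms lpls_tau_pos_iff[OF X] by (metis order_less_le_trans)
qed

section \<open>Causal curves\<close>

lemma curve_from_to_rel:
  "curve_from_to d rel a b \<gamma> x y \<Longrightarrow> rel x y"
  unfolding curve_from_to_def fd_curve_def by force

lemma fd_curve_le_mono:
  assumes "fd_curve d rel a b \<gamma>" and "\<And>x y. rel x y \<Longrightarrow> le x y" and "\<And>x. le x x"
    and "s \<in> {a..b}" "t \<in> {a..b}" "s \<le> t"
  shows "le (\<gamma> s) (\<gamma> t)"
  using assms unfolding fd_curve_def by (cases "s = t") auto

lemma lipschitz_curve_nonneg_bound:
  assumes "lipschitz_curve d a b \<gamma>"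
  obtains L where "0 \<le> L" "\<And>s t. s \<in> {a..b} \<Longrightarrow> t \<in> {a..b} \<Longrightarrow> d (\<gamma> s) (\<gamma> t) \<le> L * \<bar>s - t\<bar>"
proof -
  obtain L where L: "\<forall>s\<in>{a..b}. \<forall>t\<in>{a..b}. d (\<gamma> s) (\<gamma> t) \<le> L * \<bar>s - t\<bar>"
    using assms unfolding lipschitz_curve_def by blast
  show thesis
  proof (rule that[of "\<bar>L\<bar>"])
    fix s t assume "s \<in> {a..b}" "t \<in> {a..b}"
    then have "d (\<gamma> s) (\<gamma> t) \<le> L * \<bar>s - t\<bar>" using L by blast
    also have "\<dots> \<le> \<bar>L\<bar> * \<bar>s - t\<bar>" by (intro mult_right_mono) auto
    finally show "d (\<gamma> s) (\<gamma> t) \<le> \<bar>L\<bar> * \<bar>s - t\<bar>" .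
  qed simp
qed

lemma lipschitz_curve_uniformly_close:
  assumes "lipschitz_curve d a b \<gamma>" and "0 < r"
  obtains \<delta> where "0 < \<delta>"
    "\<And>s t. s \<in> {a..b} \<Longrightarrow> t \<in> {a..b} \<Longrightarrow> \<bar>s - t\<bar> < \<delta> \<Longrightarrow> d (\<gamma> s) (\<gamma> t) < r"
proof -
  obtain L where L: "0 \<le> L" "\<And>s t. s \<in> {a..b} \<Longrightarrow> t \<in> {a..b} \<Longrightarrow> d (\<gamma> s) (\<gamma> t) \<le> L * \<bar>s - t\<bar>"
    using lipschitz_curve_nonneg_bound[OF assms(1)] by blast
  show thesis
  proof (rule that[of "r / (L + 1)"])
    show "0 < r / (L + 1)" using assms(2) L(1) by simp
    fix s t assume st: "s \<in> {a..b}" "t \<in> {a..b}" "\<bar>s - t\<bar> < r / (L + 1)"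
    have "L * \<bar>s - t\<bar> \<le> (L + 1) * \<bar>s - t\<bar>" by (simp add: algebra_simps)
    also have "\<dots> < r" using st(3) L(1) by (simp add: field_simps)
    finally show "d (\<gamma> s) (\<gamma> t) < r" using L(2)[OF st(1,2)] by linarith
  qed
qed

lemma lipschitz_curve_near_in_openin:
  assumes d: "Metric_space UNIV d" and lip: "lipschitz_curve d a b \<gamma>"
    and W: "openin (mtop UNIV d) W" and t: "t \<in> {a..b}" "\<gamma> t \<in> W"
  obtains \<delta> where "0 < \<delta>" "\<And>s. s \<in> {a..b} \<Longrightarrow> \<bar>s - t\<bar> < \<delta> \<Longrightarrow> \<gamma> s \<in> W"
proof -
  obtain r where r: "0 < r" "Metric_space.mball UNIV d (\<gamma> t) r \<subseteq> W"
    using W t(2) Metric_space.openin_mtopology[OF d] by blast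
  obtain \<delta> where \<delta>: "0 < \<delta>"
    "\<And>s t. s \<in> {a..b} \<Longrightarrow> t \<in> {a..b} \<Longrightarrow> \<bar>s - t\<bar> < \<delta> \<Longrightarrow> d (\<gamma> s) (\<gamma> t) < r"
    using lipschitz_curve_uniformly_close[OF lip r(1)] by blast
  show thesis
  proof (rule that[OF \<delta>(1)])
    fix s assume "s \<in> {a..b}" "\<bar>s - t\<bar> < \<delta>"
    then have "d (\<gamma> t) (\<gamma> s) < r" using \<delta>(2)[OF t(1)] by (simp add: abs_minus_commute)
    then show "\<gamma> s \<in> W" using r(2) Metric_space.in_mball[OF d] by blast
  qed
qed

lemma lipschitz_curveI_ordered:
  assumes d: "Metric_space UNIV d"
    and bound: "\<And>s t. s \<in> {a..b} \<Longrightarrow> t \<in> {a..b} \<Longrightarrow> s < t \<Longrightarrow> d (\<gamma> s) (\<gamma> t) \<le> K * (t - s)"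
  shows "lipschitz_curve d a b \<gamma>"
  unfolding lipschitz_curve_def
proof (intro exI[of _ K] ballI)
  fix s t assume st: "s \<in> {a..b}" "t \<in> {a..b}"
  consider "s < t" | "s = t" | "t < s" by linarith
  then show "d (\<gamma> s) (\<gamma> t) \<le> K * \<bar>s - t\<bar>"
  proof cases
    case 1 then show ?thesis using bound[OF st] by simp
  next
    case 2 then show ?thesis using Metric_space.mdist_zero[OF d] by simp
  next
    case 3 then show ?thesis
      using bound[OF st(2,1)] Metric_space.commute[OF d] by simp
  qed
qed

lemma fd_curveI_ordered:
  assumes "Metric_space UNIV d" and "a < b"
    and "\<And>s t. s \<in> {a..b} \<Longrightarrow> t \<in> {a..b} \<Longrightarrow> s < t \<Longrightarrow>
           rel (\<gamma> s) (\<gamma> t) \<and> d (\<gamma> s) (\<gamma> t) \<le> K * (t - s)"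
    and "\<exists>s\<in>{a..b}. \<exists>t\<in>{a..b}. \<gamma> s \<noteq> \<gamma> t"
  shows "fd_curve d rel a b \<gamma>"
proof -
  have "lipschitz_curve d a b \<gamma>"
    using assms(3) by (intro lipschitz_curveI_ordered[OF assms(1), of a b \<gamma> K]) blast
  then show ?thesis
    unfolding fd_curve_def using assms(2-4) by blast
qed

lemma lipschitz_curve_Lebesgue_number:
  assumes d: "Metric_space UNIV d" and \<gamma>: "lipschitz_curve d a b \<gamma>"
    and W: "\<And>t. t \<in> {a..b} \<Longrightarrow> openin (mtop UNIV d) (W t) \<and> \<gamma> t \<in> W t"
  obtains T \<epsilon> where "finite T" "T \<subseteq> {a..b}" "0 < \<epsilon>"
    "\<And>s s'. s \<in> {a..b} \<Longrightarrow> s' \<in> {a..b} \<Longrightarrow> \<bar>s - s'\<bar> < \<epsilon> \<Longrightarrow>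
       \<exists>t\<in>T. \<gamma> s \<in> W t \<and> \<gamma> s' \<in> W t"
proof -
  have "\<forall>t\<in>{a..b}. \<exists>\<delta>>0. \<forall>s\<in>{a..b}. \<bar>s - t\<bar> < \<delta> \<longrightarrow> \<gamma> s \<in> W t"
  proof
    fix t assume t: "t \<in> {a..b}"
    obtain \<delta> where "0 < \<delta>" "\<And>s. s \<in> {a..b} \<Longrightarrow> \<bar>s - t\<bar> < \<delta> \<Longrightarrow> \<gamma> s \<in> W t"
      using lipschitz_curve_near_in_openin[OF d \<gamma> _ t] W[OF t] by blast
    then show "\<exists>\<delta>>0. \<forall>s\<in>{a..b}. \<bar>s - t\<bar> < \<delta> \<longrightarrow> \<gamma> s \<in> W t" by blast
  qed
  from bchoice[OF this] obtain \<delta> where \<delta>: "\<And>t. t \<in> {a..b} \<Longrightarrow> 0 < \<delta> t"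
    "\<And>t s. t \<in> {a..b} \<Longrightarrow> s \<in> {a..b} \<Longrightarrow> \<bar>s - t\<bar> < \<delta> t \<Longrightarrow> \<gamma> s \<in> W t"
    by blast
  obtain T where T: "T \<subseteq> {a..b}" "finite T" "{a..b} \<subseteq> (\<Union>t\<in>T. ball t (\<delta> t))"
  proof (rule compactE_image[of "{a..b}" "{a..b}" "\<lambda>t. ball t (\<delta> t)"])
    show "{a..b} \<subseteq> (\<Union>t\<in>{a..b}. ball t (\<delta> t))" using \<delta>(1) by force
  qed auto
  obtain \<epsilon> where \<epsilon>: "0 < \<epsilon>" "\<And>s. s \<in> {a..b} \<Longrightarrow> \<exists>G\<in>(\<lambda>t. ball t (\<delta> t)) ` T. ball s \<epsilon> \<subseteq> G"
    by (rule Heine_Borel_lemma[OF compact_Icc T(3)]) auto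
  show thesis
  proof (rule that[OF T(2,1) \<epsilon>(1)])
    fix s s' assume ss: "s \<in> {a..b}" "s' \<in> {a..b}" "\<bar>s - s'\<bar> < \<epsilon>"
    then obtain t where "t \<in> T" "ball s \<epsilon> \<subseteq> ball t (\<delta> t)" using \<epsilon>(2) by blast
    moreover have "s \<in> ball s \<epsilon>" "s' \<in> ball s \<epsilon>" using ss \<epsilon>(1) by (auto simp: dist_real_def)
    ultimately have "s \<in> ball t (\<delta> t)" "s' \<in> ball t (\<delta> t)" by blast+
    then have "\<bar>s - t\<bar> < \<delta> t" "\<bar>s' - t\<bar> < \<delta> t"
      by (auto simp: dist_real_def abs_minus_commute)
    with \<open>t \<in> T\<close> show "\<exists>t\<in>T. \<gamma> s \<in> W t \<and> \<gamma> s' \<in> W t"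
      using \<delta>(2) T(1) ss(1,2) by blast
  qed
qed

lemma interval_chain:
  fixes P :: "real \<Rightarrow> real \<Rightarrow> bool"
  assumes "0 < \<epsilon>"
    and close: "\<And>s s'. s \<in> {a..b} \<Longrightarrow> s' \<in> {a..b} \<Longrightarrow> s \<le> s' \<Longrightarrow> s' - s < \<epsilon> \<Longrightarrow> P s s'"
    and trans: "\<And>s u s'. s \<in> {a..b} \<Longrightarrow> s' \<in> {a..b} \<Longrightarrow> s \<le> u \<Longrightarrow> u \<le> s' \<Longrightarrow>
                  P s u \<Longrightarrow> P u s' \<Longrightarrow> P s s'"
    and "s \<in> {a..b}" "s' \<in> {a..b}" "s \<le> s'"
  shows "P s s'"
proof -
  have "P s s'" if "s \<in> {a..b}" "s \<le> s'" "s' - s \<le> real n * (\<epsilon> / 2)" for n s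
    using that
  proof (induction n arbitrary: s)
    case 0
    then show ?case using close \<open>0 < \<epsilon>\<close> \<open>s' \<in> {a..b}\<close> by simp
  next
    case (Suc n)
    show ?case
    proof (cases "s' - s < \<epsilon>")
      case True
      then show ?thesis using close Suc.prems \<open>s' \<in> {a..b}\<close> by blast
    next
      case False
      define u where "u = s + \<epsilon> / 2"
      have u: "u \<in> {a..b}" "s \<le> u" "u \<le> s'" "u - s < \<epsilon>" "s' - u \<le> real n * (\<epsilon> / 2)"
        using Suc.prems False \<open>0 < \<epsilon>\<close> \<open>s' \<in> {a..b}\<close> by (auto simp: u_def algebra_simps)
      show ?thesis
        using trans[OF Suc.prems(1) \<open>s' \<in> {a..b}\<close> u(2,3)] close[OF Suc.prems(1) u(1,2,4)]
          Suc.IH[OF u(1,3,5)] by blast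
    qed
  qed
  moreover obtain n where "(s' - s) / (\<epsilon> / 2) \<le> real n"
    using real_arch_simple by blast
  ultimately show ?thesis
    using assms(1,4,6) by (simp add: field_simps)
qed

section \<open>Strong causality\<close>

definition timelike_diamonds :: "('a \<Rightarrow> 'a \<Rightarrow> bool) \<Rightarrow> 'a set set" where
  "timelike_diamonds ll = {{z. ll x z} \<inter> {z. ll z y} | x y. True}"

definition causally_convex :: "('a \<Rightarrow> 'a \<Rightarrow> bool) \<Rightarrow> 'a set \<Rightarrow> bool" where
  "causally_convex le C \<longleftrightarrow> (\<forall>p\<in>C. \<forall>q\<in>C. \<forall>w. le p w \<and> le w q \<longrightarrow> w \<in> C)"

lemma strongly_causal_openin_iff:
  assumes "strongly_causal d ll"
  shows "openin (mtop UNIV d) U \<longleftrightarrow> generate_topology_on (timelike_diamonds ll) U"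
proof -
  have "mtop UNIV d = topology_generated_by (timelike_diamonds ll)"
    using assms unfolding strongly_causal_def timelike_diamonds_def by simp
  then show ?thesis by (simp add: openin_topology_generated_by_iff)
qed

lemma strongly_causal_openin_diamond:
  assumes "strongly_causal d ll"
  shows "openin (mtop UNIV d) ({z. ll x z} \<inter> {z. ll z y})"
  unfolding strongly_causal_openin_iff[OF assms] timelike_diamonds_def
  by (rule generate_topology_on.Basis) blast

lemma strongly_causal_distinguishing:
  assumes d: "Metric_space UNIV d" and sc: "strongly_causal d ll"
    and future: "\<And>r. ll p r \<longleftrightarrow> ll q r" and past: "\<And>r. ll r p \<longleftrightarrow> ll r q"
  shows "p = q"
proof (rule ccontr)
  assume "p \<noteq> q"
  have "p \<in> U \<longleftrightarrow> q \<in> U" if "generate_topology_on (timelike_diamonds ll) U" for U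
    using that
  proof (induction rule: generate_topology_on.induct)
    case (Basis s)
    then show ?case using future past by (auto simp: timelike_diamonds_def)
  qed auto
  moreover have "generate_topology_on (timelike_diamonds ll) (Metric_space.mball UNIV d p (d p q))"
    using Metric_space.openin_mball[OF d] strongly_causal_openin_iff[OF sc] by blast
  moreover have "p \<in> Metric_space.mball UNIV d p (d p q)"
    using \<open>p \<noteq> q\<close> Metric_space.mdist_pos_eq[OF d] Metric_space.in_mball[OF d] Metric_space.mdist_zero[OF d]
    by simp
  moreover have "q \<notin> Metric_space.mball UNIV d p (d p q)"
    using Metric_space.in_mball[OF d] by simp
  ultimately show False by blast
qed

lemma strongly_causal_convex_nhd:
  assumes X: "lpls UNIV d ll le tau" and sc: "strongly_causal d ll"
    and W: "openin (mtop UNIV d) W" "z \<in> W"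
  obtains C where "openin (mtop UNIV d) C" "z \<in> C" "C \<subseteq> W" "causally_convex le C"
proof -
  let ?open = "generate_topology_on (timelike_diamonds ll)"
  have "\<forall>z\<in>U. \<exists>C. ?open C \<and> z \<in> C \<and> C \<subseteq> U \<and> causally_convex le C" if "?open U" for U
    using that
  proof (induction rule: generate_topology_on.induct)
    case Empty
    then show ?case by simp
  next
    case (Int U V)
    show ?case
    proof
      fix z assume "z \<in> U \<inter> V"
      then obtain CU CV where "?open CU" "z \<in> CU" "CU \<subseteq> U" "causally_convex le CU"
        "?open CV" "z \<in> CV" "CV \<subseteq> V" "causally_convex le CV"
        using Int.IH by blast
      moreover have "?open (CU \<inter> CV)"
        using \<open>?open CU\<close> \<open>?open CV\<close> by (rule generate_topology_on.Int)
      moreover have "causally_convex le (CU \<inter> CV)"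
        using \<open>causally_convex le CU\<close> \<open>causally_convex le CV\<close>
        unfolding causally_convex_def by blast
      ultimately show "\<exists>C. ?open C \<and> z \<in> C \<and> C \<subseteq> U \<inter> V \<and> causally_convex le C"
        by blast
    qed
  next
    case (UN K)
    show ?case
    proof
      fix z assume "z \<in> \<Union>K"
      then obtain k where "k \<in> K" "z \<in> k" by blast
      with UN.IH obtain C where "?open C" "z \<in> C" "C \<subseteq> k" "causally_convex le C" by blast
      with \<open>k \<in> K\<close> show "\<exists>C. ?open C \<and> z \<in> C \<and> C \<subseteq> \<Union>K \<and> causally_convex le C" by blast
    qed
  next
    case (Basis s)
    then obtain x y where s: "s = {z. ll x z} \<inter> {z. ll z y}"
      by (auto simp: timelike_diamonds_def)
    have "causally_convex le s"
      unfolding causally_convex_def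
    proof (intro ballI allI impI)
      fix p q w assume "p \<in> s" "q \<in> s" "le p w \<and> le w q"
      then have "ll x w" "ll w y"
        using s lpls_le_ll_trans[OF X] lpls_ll_le_trans[OF X] by blast+
      then show "w \<in> s" using s by simp
    qed
    moreover have "?open s" using Basis.hyps by (rule generate_topology_on.Basis)
    ultimately show ?case by blast
  qed
  moreover have "?open W" using W(1) strongly_causal_openin_iff[OF sc] by blast
  ultimately obtain C where "?open C" "z \<in> C" "C \<subseteq> W" "causally_convex le C"
    using W(2) by blast
  with that show thesis using strongly_causal_openin_iff[OF sc] by blast
qed

section \<open>Distance homothetic maps\<close>

lemma ennreal_mult_INF:
  assumes "0 < c"
  shows "ennreal c * (INF i\<in>I. g i) = (INF i\<in>I. ennreal c * g i)"
proof -
  have "bij ((*) (ennreal c))"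
    using assms
    by (intro bij_betw_byWitness[of _ "(*) (ennreal (1 / c))"])
       (auto simp: mult.assoc[symmetric] ennreal_mult[symmetric])
  then show ?thesis
    using mono_bij_Inf[of "(*) (ennreal c)" "g ` I"]
    by (simp add: mono_def mult_left_mono image_image)
qed

lemma distance_homothetic_ll_iff:
  assumes hom: "distance_homothetic tau tau' f"
    and pos: "\<And>x y. 0 < tau x y \<longleftrightarrow> ll x y" and pos': "\<And>x y. 0 < tau' x y \<longleftrightarrow> ll' x y"
  shows "ll' (f u) (f v) \<longleftrightarrow> ll u v"
proof -
  obtain c where "0 < c" "tau' (f u) (f v) = ennreal c * tau u v"
    using hom unfolding distance_homothetic_def by blast
  then show ?thesis
    by (simp add: pos[symmetric] pos'[symmetric] ennreal_zero_less_mult_iff)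
qed

lemma distance_homothetic_inj:
  assumes X: "lpls UNIV d ll le tau" and sc: "strongly_causal d ll"
    and hom: "distance_homothetic tau tau' f" and pos': "\<And>x y. 0 < tau' x y \<longleftrightarrow> ll' x y"
  shows "inj f"
proof (rule injI)
  fix p q assume "f p = f q"
  have ll: "ll' (f u) (f v) \<longleftrightarrow> ll u v" for u v
    using distance_homothetic_ll_iff[OF hom lpls_tau_pos_iff[OF X] pos'] .
  show "p = q"
    by (rule strongly_causal_distinguishing[OF lpls_metric[OF X] sc])
       (metis ll \<open>f p = f q\<close>)+
qed

lemma distance_homothetic_Ltau:
  assumes hom: "distance_homothetic tau tau' f" and "Ltau tau a b \<gamma> = tau x y"
  shows "Ltau tau' a b (f \<circ> \<gamma>) = tau' (f x) (f y)"
proof -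
  obtain c where c: "0 < c" "\<And>p q. tau' (f p) (f q) = ennreal c * tau p q"
    using hom unfolding distance_homothetic_def by blast
  have "Ltau tau' a b (f \<circ> \<gamma>) = ennreal c * Ltau tau a b \<gamma>"
    unfolding Ltau_def case_prod_unfold
    by (simp add: c(2) sum_distrib_left ennreal_mult_INF[OF c(1)])
  then show ?thesis
    using assms(2) c(2) by simp
qed

section \<open>Local causality of distance homothetic maps\<close>

lemma fd_curve_leaves_endpoints_into:
  assumes d: "Metric_space UNIV d" and \<sigma>: "fd_curve d rel a b \<sigma>" and W: "openin (mtop UNIV d) W"
  shows "\<sigma> a \<in> W \<Longrightarrow> \<exists>t\<in>{a<..b}. \<sigma> t \<in> W"
    and "\<sigma> b \<in> W \<Longrightarrow> \<exists>t\<in>{a..<b}. \<sigma> t \<in> W"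
proof -
  have ab: "a < b" and lip: "lipschitz_curve d a b \<sigma>"
    using \<sigma> unfolding fd_curve_def by blast+
  show "\<exists>t\<in>{a<..b}. \<sigma> t \<in> W" if start: "\<sigma> a \<in> W"
  proof -
    obtain \<delta> where \<delta>: "0 < \<delta>" "\<And>s. s \<in> {a..b} \<Longrightarrow> \<bar>s - a\<bar> < \<delta> \<Longrightarrow> \<sigma> s \<in> W"
      using lipschitz_curve_near_in_openin[OF d lip W _ start] ab by auto
    have "\<sigma> (min b (a + \<delta> / 2)) \<in> W" using ab \<delta>(1) by (intro \<delta>(2)) auto
    then show ?thesis using ab \<delta>(1) by (intro bexI[of _ "min b (a + \<delta> / 2)"]) auto
  qed
  show "\<exists>t\<in>{a..<b}. \<sigma> t \<in> W" if finish: "\<sigma> b \<in> W"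
  proof -
    obtain \<delta> where \<delta>: "0 < \<delta>" "\<And>s. s \<in> {a..b} \<Longrightarrow> \<bar>s - b\<bar> < \<delta> \<Longrightarrow> \<sigma> s \<in> W"
      using lipschitz_curve_near_in_openin[OF d lip W _ finish] ab by auto
    have "\<sigma> (max a (b - \<delta> / 2)) \<in> W" using ab \<delta>(1) by (intro \<delta>(2)) auto
    then show ?thesis using ab \<delta>(1) by (intro bexI[of _ "max a (b - \<delta> / 2)"]) auto
  qed
qed

lemma lls_exists_chronological_neighbours:
  assumes "lorentzian_length_space d ll le tau"
  shows "\<exists>z. ll w z" and "\<exists>z. ll z w"
proof -
  obtain \<Omega> V where "w \<in> V" "V \<subseteq> \<Omega>"
    and "\<forall>y\<in>\<Omega>. (\<exists>z\<in>\<Omega>. ll y z) \<and> (\<exists>z\<in>\<Omega>. ll z y)"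
    using lls_localizable[OF assms] unfolding localizable_def
    by (elim allE[where x = w] exE conjE) blast
  then show "\<exists>z. ll w z" "\<exists>z. ll z w" by blast+
qed

lemma lls_chronological_neighbours_in:
  assumes X: "lorentzian_length_space d ll le tau"
    and W: "openin (mtop UNIV d) W" "w \<in> W"
  shows "\<exists>w'\<in>W. ll w w'" and "\<exists>w'\<in>W. ll w' w"
proof -
  have d: "Metric_space UNIV d" using lpls_metric[OF lls_lpls[OF X]] .
  have cpc: "\<And>x y. ll x y \<Longrightarrow> \<exists>a b \<sigma>. curve_from_to d ll a b \<sigma> x y"
    using lls_causally_path_connected[OF X] unfolding causally_path_connected_def by blast
  obtain z where "ll w z" using lls_exists_chronological_neighbours(1)[OF X] by blast
  then obtain a b \<sigma> where \<sigma>: "fd_curve d ll a b \<sigma>" "\<sigma> a = w"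
    using cpc unfolding curve_from_to_def by blast
  then obtain t where t: "t \<in> {a<..b}" "\<sigma> t \<in> W"
    using fd_curve_leaves_endpoints_into(1)[OF d \<sigma>(1) W(1)] W(2) by blast
  have "ll w (\<sigma> t)" using \<sigma> t(1) unfolding fd_curve_def by auto
  with t(2) show "\<exists>w'\<in>W. ll w w'" by blast
  obtain z' where "ll z' w" using lls_exists_chronological_neighbours(2)[OF X] by blast
  then obtain a b \<sigma> where \<sigma>: "fd_curve d ll a b \<sigma>" "\<sigma> b = w"
    using cpc unfolding curve_from_to_def by blast
  then obtain t where t: "t \<in> {a..<b}" "\<sigma> t \<in> W"
    using fd_curve_leaves_endpoints_into(2)[OF d \<sigma>(1) W(1)] W(2) by blast
  have "ll (\<sigma> t) w" using \<sigma> t(1) unfolding fd_curve_def by auto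
  with t(2) show "\<exists>w'\<in>W. ll w' w" by blast
qed

lemma lls_chronological_future_sequence:
  assumes X: "lorentzian_length_space d ll le tau"
    and C: "openin (mtop UNIV d) C" "q \<in> C"
  obtains qs where "\<And>n. qs n \<in> C" "\<And>n. ll q (qs n)" "limitin (mtop UNIV d) qs q sequentially"
proof -
  have d: "Metric_space UNIV d" using lpls_metric[OF lls_lpls[OF X]] .
  have "\<forall>n. \<exists>w. w \<in> C \<inter> Metric_space.mball UNIV d q (inverse (Suc n)) \<and> ll q w"
  proof
    fix n :: nat
    have "openin (mtop UNIV d) (C \<inter> Metric_space.mball UNIV d q (inverse (Suc n)))"
      using C(1) Metric_space.openin_mball[OF d] by blast
    moreover have "q \<in> C \<inter> Metric_space.mball UNIV d q (inverse (Suc n))"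
      using C(2) Metric_space.centre_in_mball_iff[OF d] by simp
    ultimately show "\<exists>w. w \<in> C \<inter> Metric_space.mball UNIV d q (inverse (Suc n)) \<and> ll q w"
      using lls_chronological_neighbours_in(1)[OF X] by blast
  qed
  from choice[OF this] obtain qs
    where "\<forall>n. qs n \<in> C \<inter> Metric_space.mball UNIV d q (inverse (Suc n)) \<and> ll q (qs n)"
    by blast
  then have qs: "\<And>n. qs n \<in> C" "\<And>n. d q (qs n) < inverse (Suc n)" "\<And>n. ll q (qs n)"
    using Metric_space.in_mball[OF d] by blast+
  have "limitin (mtop UNIV d) qs q sequentially"
    unfolding Metric_space.limit_metric_sequentially[OF d]
  proof (intro conjI allI impI)
    fix \<epsilon> :: real assume "0 < \<epsilon>"
    then obtain N where N: "inverse (Suc N) < \<epsilon>" using reals_Archimedean by blast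
    have "d (qs n) q < \<epsilon>" if "N \<le> n" for n
    proof -
      have "d (qs n) q < inverse (Suc n)" using qs(2) Metric_space.commute[OF d] by metis
      also have "\<dots> \<le> inverse (Suc N)" using that by (simp add: field_simps)
      finally show ?thesis using N by linarith
    qed
    then show "\<exists>N. \<forall>n\<ge>N. qs n \<in> UNIV \<and> d (qs n) q < \<epsilon>" by blast
  qed simp
  with qs that show thesis by blast
qed

lemma causally_convex_nhd_mapped_into:
  assumes X: "lorentzian_length_space d ll le tau" and sc: "strongly_causal d ll"
    and d': "Metric_space UNIV d'"
    and V: "openin (mtop UNIV d) V" "z \<in> V" and "0 < M"
    and lip: "\<And>p q. p \<in> V \<Longrightarrow> q \<in> V \<Longrightarrow> le p q \<Longrightarrow> d' (f p) (f q) \<le> M * d p q"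
    and U: "openin (mtop UNIV d') U" "f z \<in> U"
  obtains C where "openin (mtop UNIV d) C" "z \<in> C" "C \<subseteq> V" "causally_convex le C" "f ` C \<subseteq> U"
proof -
  note X' = lls_lpls[OF X]
  have d: "Metric_space UNIV d" using lpls_metric[OF X'] .
  obtain \<rho> where \<rho>: "0 < \<rho>" "Metric_space.mball UNIV d' (f z) \<rho> \<subseteq> U"
    using U Metric_space.openin_mtopology[OF d'] by blast
  define \<epsilon> where "\<epsilon> = \<rho> / (3 * M)"
  have \<epsilon>: "0 < \<epsilon>" "3 * M * \<epsilon> = \<rho>"
    using \<rho>(1) \<open>0 < M\<close> by (auto simp: \<epsilon>_def)
  define B where "B = Metric_space.mball UNIV d z \<epsilon> \<inter> V"
  have B: "openin (mtop UNIV d) B" "z \<in> B"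
    unfolding B_def using V \<epsilon>(1) Metric_space.openin_mball[OF d] Metric_space.centre_in_mball_iff[OF d]
    by auto
  obtain r1 where r1: "r1 \<in> B" "ll r1 z" using lls_chronological_neighbours_in(2)[OF X B] by blast
  obtain r2 where r2: "ll z r2" using lls_exists_chronological_neighbours(1)[OF X] by blast
  define D where "D = {w. ll r1 w} \<inter> {w. ll w r2}"
  have D: "openin (mtop UNIV d) D" "z \<in> D"
    unfolding D_def using strongly_causal_openin_diamond[OF sc] r1(2) r2 by auto
  obtain C where C: "openin (mtop UNIV d) C" "z \<in> C" "C \<subseteq> B \<inter> D" "causally_convex le C"
    using strongly_causal_convex_nhd[OF X' sc openin_Int[OF B(1) D(1)]] B(2) D(2) by blast
  \<comment> \<open>f is only controlled on causal pairs, so f w is compared with f z through the point r1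
    in the chronological past of both\<close>
  have "f w \<in> U" if "w \<in> C" for w
  proof -
    have w: "d z w < \<epsilon>" "w \<in> V" "ll r1 w" and r1': "d z r1 < \<epsilon>" "r1 \<in> V"
      using that C(3) r1(1) Metric_space.in_mball[OF d] unfolding B_def D_def by auto
    have "d' (f z) (f w) \<le> d' (f r1) (f z) + d' (f r1) (f w)"
      using Metric_space.triangle''[OF d'] by simp
    also have "\<dots> \<le> M * d r1 z + M * d r1 w"
      using lip r1' V(2) r1(2) w lpls_ll_imp_le[OF X'] by (intro add_mono) auto
    also have "\<dots> < M * \<epsilon> + M * (2 * \<epsilon>)"
    proof -
      have "d r1 w \<le> d z r1 + d z w" using Metric_space.triangle''[OF d] by simp
      then show ?thesis
        using w(1) r1'(1) \<open>0 < M\<close> Metric_space.commute[OF d, of r1 z] by (intro add_le_less_mono) auto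
    qed
    also have "\<dots> = \<rho>" using \<epsilon>(2) by (simp add: algebra_simps)
    finally show "f w \<in> U"
      using \<rho>(2) Metric_space.in_mball[OF d'] by blast
  qed
  with C B_def that show thesis by blast
qed

lemma le_in_imp_le:
  assumes "\<And>x. le x x" and "le_in d le U p q"
  shows "le p q"
  using assms(2) unfolding le_in_def
proof (elim disjE exE conjE)
  assume "p = q"
  then show ?thesis using assms(1) by simp
next
  fix a b \<gamma> assume "curve_from_to d le a b \<gamma> p q"
  then show ?thesis by (rule curve_from_to_rel)
qed

lemma chronological_pair_le_in_image:
  assumes X: "lorentzian_length_space d ll le tau" and Y: "lorentzian_length_space d' ll' le' tau'"
    and llf: "\<And>u v. ll u v \<Longrightarrow> ll' (f u) (f v)"
    and C: "causally_convex le C" and "0 \<le> M"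
    and lip: "\<And>p q. p \<in> C \<Longrightarrow> q \<in> C \<Longrightarrow> le p q \<Longrightarrow> d' (f p) (f q) \<le> M * d p q"
    and "f ` C \<subseteq> U" and pq: "p \<in> C" "q \<in> C" "ll p q"
  shows "le_in d' le' U (f p) (f q)"
proof (cases "f p = f q")
  case True
  then show ?thesis unfolding le_in_def by simp
next
  case False
  note X' = lls_lpls[OF X] and Y' = lls_lpls[OF Y]
  obtain a b \<sigma> where \<sigma>: "fd_curve d ll a b \<sigma>" "\<sigma> a = p" "\<sigma> b = q"
    using lls_causally_path_connected[OF X] pq(3)
    unfolding causally_path_connected_def curve_from_to_def by blast
  have ab: "a < b" and lip\<sigma>: "lipschitz_curve d a b \<sigma>"
    using \<sigma>(1) unfolding fd_curve_def by blast+
  obtain L where L: "0 \<le> L" "\<And>s t. s \<in> {a..b} \<Longrightarrow> t \<in> {a..b} \<Longrightarrow> d (\<sigma> s) (\<sigma> t) \<le> L * \<bar>s - t\<bar>"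
    using lipschitz_curve_nonneg_bound[OF lip\<sigma>] by blast
  have le\<sigma>: "le (\<sigma> s) (\<sigma> t)" if "s \<in> {a..b}" "t \<in> {a..b}" "s \<le> t" for s t
    using fd_curve_le_mono[OF \<sigma>(1) lpls_ll_imp_le[OF X'] lpls_le_refl[OF X'] that] .
  have in_C: "\<sigma> s \<in> C" if "s \<in> {a..b}" for s
  proof -
    have "le p (\<sigma> s)" "le (\<sigma> s) q"
      using le\<sigma>[of a s] le\<sigma>[of s b] that ab \<sigma>(2,3) by auto
    then show ?thesis using C pq(1,2) unfolding causally_convex_def by blast
  qed
  have "fd_curve d' le' a b (f \<circ> \<sigma>)"
  proof (rule fd_curveI_ordered[OF lpls_metric[OF Y'] ab])
    fix s t assume st: "s \<in> {a..b}" "t \<in> {a..b}" "s < t"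
    have "ll (\<sigma> s) (\<sigma> t)" using \<sigma>(1) st unfolding fd_curve_def by blast
    then have le': "le' ((f \<circ> \<sigma>) s) ((f \<circ> \<sigma>) t)" using llf lpls_ll_imp_le[OF Y'] by simp
    have "d' (f (\<sigma> s)) (f (\<sigma> t)) \<le> M * d (\<sigma> s) (\<sigma> t)"
      using lip in_C le\<sigma> st by simp
    also have "\<dots> \<le> M * (L * (t - s))"
      using L(2)[OF st(1,2)] st(3) \<open>0 \<le> M\<close> by (intro mult_left_mono) auto
    finally show "le' ((f \<circ> \<sigma>) s) ((f \<circ> \<sigma>) t) \<and>
        d' ((f \<circ> \<sigma>) s) ((f \<circ> \<sigma>) t) \<le> (M * L) * (t - s)"
      using le' by (simp add: mult.assoc)
  next
    show "\<exists>s\<in>{a..b}. \<exists>t\<in>{a..b}. (f \<circ> \<sigma>) s \<noteq> (f \<circ> \<sigma>) t"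
      using False ab \<sigma>(2,3) by (intro bexI[of _ a] bexI[of _ b]) auto
  qed
  moreover have "(f \<circ> \<sigma>) ` {a..b} \<subseteq> U" using in_C \<open>f ` C \<subseteq> U\<close> by auto
  moreover have "(f \<circ> \<sigma>) a = f p" "(f \<circ> \<sigma>) b = f q" using \<sigma>(2,3) by simp_all
  ultimately show ?thesis
    unfolding le_in_def curve_from_to_def by blast
qed

lemma causally_closed_image_preserves_le:
  assumes X: "lorentzian_length_space d ll le tau" and Y: "lorentzian_length_space d' ll' le' tau'"
    and llf: "\<And>u v. ll u v \<Longrightarrow> ll' (f u) (f v)"
    and C: "openin (mtop UNIV d) C" "causally_convex le C" and "0 \<le> M"
    and lip: "\<And>p q. p \<in> C \<Longrightarrow> q \<in> C \<Longrightarrow> le p q \<Longrightarrow> d' (f p) (f q) \<le> M * d p q"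
    and U: "causally_closed d' le' U" "f ` C \<subseteq> U"
    and pq: "p \<in> C" "q \<in> C" "le p q"
  shows "le' (f p) (f q)"
proof -
  note X' = lls_lpls[OF X] and Y' = lls_lpls[OF Y]
  have d: "Metric_space UNIV d" and d': "Metric_space UNIV d'"
    using lpls_metric[OF X'] lpls_metric[OF Y'] .
  \<comment> \<open>f is known to preserve only the chronological relation, so p \<le> q is approached by p \<ll> qs n\<close>
  obtain qs where qs: "\<And>n. qs n \<in> C" "\<And>n. ll q (qs n)" "limitin (mtop UNIV d) qs q sequentially"
    using lls_chronological_future_sequence[OF X C(1) pq(2)] by blast
  have le_in: "\<forall>n. le_in d' le' U (f p) (f (qs n))"
    using lpls_le_ll_trans[OF X' pq(3) qs(2)]
    by (intro allI chronological_pair_le_in_image[OF X Y llf C(2) \<open>0 \<le> M\<close> lip U(2) pq(1) qs(1)])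
  have lim_p: "limitin (mtop UNIV d') (\<lambda>n. f p) (f p) sequentially"
    using Metric_space.topspace_mtopology[OF d'] by simp
  have "((\<lambda>n. d (qs n) q) \<longlongrightarrow> 0) sequentially"
    using qs(3) Metric_space.limitin_metric_dist_null[OF d] by blast
  then have lim_Md: "((\<lambda>n. M * d (qs n) q) \<longlongrightarrow> 0) sequentially"
    by (rule tendsto_mult_right_zero)
  have bound: "d' (f (qs n)) (f q) \<le> M * d (qs n) q" for n
  proof -
    have "d' (f (qs n)) (f q) = d' (f q) (f (qs n))" using Metric_space.commute[OF d'] by simp
    also have "\<dots> \<le> M * d q (qs n)" using lip[OF pq(2) qs(1) lpls_ll_imp_le[OF X' qs(2)]] .
    also have "\<dots> = M * d (qs n) q" using Metric_space.commute[OF d] by simp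
    finally show ?thesis .
  qed
  have "((\<lambda>n. d' (f (qs n)) (f q)) \<longlongrightarrow> 0) sequentially"
    by (rule tendsto_sandwich[OF _ _ tendsto_const lim_Md])
       (simp_all add: Metric_space.nonneg[OF d'] bound)
  then have lim_q: "limitin (mtop UNIV d') (\<lambda>n. f (qs n)) (f q) sequentially"
    unfolding Metric_space.limitin_metric_dist_null[OF d'] by simp
  have "f p \<in> U" "f q \<in> U" using U(2) pq(1,2) by blast+
  with le_in lim_p lim_q have "le_in d' le' U (f p) (f q)"
    using U(1)[unfolded causally_closed_def, rule_format,
        where p = "f p" and q = "f q" and ps = "\<lambda>n. f p" and qs = "\<lambda>n. f (qs n)"]
    by blast
  then show ?thesis
    by (rule le_in_imp_le[OF lpls_le_refl[OF Y'], rotated])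
qed

lemma homothetic_locally_causal_lipschitz:
  assumes X: "lorentzian_length_space d ll le tau" and Y: "lorentzian_length_space d' ll' le' tau'"
    and hom: "distance_homothetic tau tau' f" and lip: "locally_causally_lipschitz d le d' f"
    and sc: "strongly_causal d ll"
  shows "\<exists>C M. openin (mtop UNIV d) C \<and> z \<in> C \<and> 0 \<le> M \<and>
           (\<forall>p\<in>C. \<forall>q\<in>C. le p q \<longrightarrow> le' (f p) (f q) \<and> d' (f p) (f q) \<le> M * d p q)"
proof -
  note X' = lls_lpls[OF X] and Y' = lls_lpls[OF Y]
  have llf: "ll' (f u) (f v)" if "ll u v" for u v
    using that distance_homothetic_ll_iff[OF hom lpls_tau_pos_iff[OF X'] lpls_tau_pos_iff[OF Y']] by blast
  obtain V M where V: "openin (mtop UNIV d) V" "z \<in> V" "0 < M"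
    and lipV: "\<And>p q. p \<in> V \<Longrightarrow> q \<in> V \<Longrightarrow> le p q \<Longrightarrow> d' (f p) (f q) \<le> M * d p q"
    using lip unfolding locally_causally_lipschitz_def by (elim allE[where x = z] exE conjE) blast
  obtain U where U: "openin (mtop UNIV d') U" "f z \<in> U" "causally_closed d' le' U"
    using lls_locally_causally_closed[OF Y] unfolding locally_causally_closed_def
    by (elim allE[where x = "f z"] exE conjE) blast
  obtain C where C: "openin (mtop UNIV d) C" "z \<in> C" "C \<subseteq> V" "causally_convex le C" "f ` C \<subseteq> U"
    using causally_convex_nhd_mapped_into[OF X sc lpls_metric[OF Y'] V lipV U(1,2)] by blast
  have lipC: "\<And>p q. p \<in> C \<Longrightarrow> q \<in> C \<Longrightarrow> le p q \<Longrightarrow> d' (f p) (f q) \<le> M * d p q"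
    using lipV C(3) by blast
  have "0 \<le> M" using V(3) by simp
  have "le' (f p) (f q)" if "p \<in> C" "q \<in> C" "le p q" for p q
    by (rule causally_closed_image_preserves_le[OF X Y llf C(1,4) \<open>0 \<le> M\<close> lipC U(3) C(5) that])
  with lipC have "\<forall>p\<in>C. \<forall>q\<in>C. le p q \<longrightarrow> le' (f p) (f q) \<and> d' (f p) (f q) \<le> M * d p q"
    by blast
  with C(1,2) \<open>0 \<le> M\<close> show ?thesis by blast
qed

lemma fd_curve_comp_locally_causal_lipschitz:
  assumes d: "Metric_space UNIV d" and d': "Metric_space UNIV d'"
    and le_refl: "\<And>x. le x x" and le'_trans: "\<And>x y z. le' x y \<Longrightarrow> le' y z \<Longrightarrow> le' x z"
    and local: "\<And>z. \<exists>C M. openin (mtop UNIV d) C \<and> z \<in> C \<and> 0 \<le> M \<and>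
                  (\<forall>p\<in>C. \<forall>q\<in>C. le p q \<longrightarrow> le' (f p) (f q) \<and> d' (f p) (f q) \<le> M * d p q)"
    and \<gamma>: "fd_curve d le a b \<gamma>" and "inj f"
  shows "fd_curve d' le' a b (f \<circ> \<gamma>)"
proof -
  have "\<forall>z. \<exists>C M. openin (mtop UNIV d) C \<and> z \<in> C \<and> 0 \<le> M \<and>
           (\<forall>p\<in>C. \<forall>q\<in>C. le p q \<longrightarrow> le' (f p) (f q) \<and> d' (f p) (f q) \<le> M * d p q)"
    using local by blast
  from choice[OF this] obtain Cf where "\<forall>z. \<exists>M. openin (mtop UNIV d) (Cf z) \<and> z \<in> Cf z \<and> 0 \<le> M \<and>
           (\<forall>p\<in>Cf z. \<forall>q\<in>Cf z. le p q \<longrightarrow> le' (f p) (f q) \<and> d' (f p) (f q) \<le> M * d p q)"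
    by blast
  from choice[OF this] obtain Mf
    where Cf: "\<And>z. openin (mtop UNIV d) (Cf z)" "\<And>z. z \<in> Cf z" "\<And>z. 0 \<le> Mf z"
    and lipCf: "\<And>z p q. p \<in> Cf z \<Longrightarrow> q \<in> Cf z \<Longrightarrow> le p q \<Longrightarrow>
                  le' (f p) (f q) \<and> d' (f p) (f q) \<le> Mf z * d p q"
    by blast
  have ab: "a < b" and lip: "lipschitz_curve d a b \<gamma>"
    using \<gamma> unfolding fd_curve_def by blast+
  obtain L where L: "0 \<le> L" "\<And>s t. s \<in> {a..b} \<Longrightarrow> t \<in> {a..b} \<Longrightarrow> d (\<gamma> s) (\<gamma> t) \<le> L * \<bar>s - t\<bar>"
    using lipschitz_curve_nonneg_bound[OF lip] by blast
  obtain T \<epsilon> where T: "finite T" "T \<subseteq> {a..b}" "0 < \<epsilon>"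
    and cover: "\<And>s s'. s \<in> {a..b} \<Longrightarrow> s' \<in> {a..b} \<Longrightarrow> \<bar>s - s'\<bar> < \<epsilon> \<Longrightarrow>
                  \<exists>t\<in>T. \<gamma> s \<in> Cf (\<gamma> t) \<and> \<gamma> s' \<in> Cf (\<gamma> t)"
    using lipschitz_curve_Lebesgue_number[OF d lip, of "\<lambda>t. Cf (\<gamma> t)"] Cf(1,2) by blast
  define K where "K = Max ((\<lambda>t. Mf (\<gamma> t)) ` T) * L"
  let ?P = "\<lambda>s s'. le' (f (\<gamma> s)) (f (\<gamma> s')) \<and> d' (f (\<gamma> s)) (f (\<gamma> s')) \<le> K * (s' - s)"
  have "?P s s'" if ss: "s \<in> {a..b}" "s' \<in> {a..b}" "s \<le> s'" for s s'
  proof (rule interval_chain[OF T(3) _ _ ss])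
    fix s s' assume ss: "s \<in> {a..b}" "s' \<in> {a..b}" "s \<le> s'" "s' - s < \<epsilon>"
    then have "\<bar>s - s'\<bar> < \<epsilon>" by simp
    then obtain t where t: "t \<in> T" "\<gamma> s \<in> Cf (\<gamma> t)" "\<gamma> s' \<in> Cf (\<gamma> t)"
      using cover[OF ss(1,2)] by blast
    have le: "le (\<gamma> s) (\<gamma> s')"
      by (rule fd_curve_le_mono[OF \<gamma> _ le_refl ss(1-3)])
    have Mf_le: "Mf (\<gamma> t) \<le> Max ((\<lambda>t. Mf (\<gamma> t)) ` T)"
      using T(1) t(1) by (intro Max_ge) auto
    have "d' (f (\<gamma> s)) (f (\<gamma> s')) \<le> Mf (\<gamma> t) * d (\<gamma> s) (\<gamma> s')"
      using lipCf[OF t(2,3) le] by blast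
    also have "\<dots> \<le> Max ((\<lambda>t. Mf (\<gamma> t)) ` T) * (L * (s' - s))"
    proof (rule mult_mono[OF Mf_le])
      show "d (\<gamma> s) (\<gamma> s') \<le> L * (s' - s)" using L(2)[OF ss(1,2)] ss(3) by simp
      show "0 \<le> Max ((\<lambda>t. Mf (\<gamma> t)) ` T)" using Cf(3) Mf_le by (rule order_trans)
      show "0 \<le> d (\<gamma> s) (\<gamma> s')" using Metric_space.nonneg[OF d] .
    qed
    finally show "?P s s'"
      using lipCf[OF t(2,3) le] by (simp add: K_def mult.assoc)
  next
    fix s u s' assume "u \<le> s'" "s \<le> u" and su: "?P s u" and us: "?P u s'"
    then have "le' (f (\<gamma> s)) (f (\<gamma> s'))" using le'_trans by blast
    moreover have "d' (f (\<gamma> s)) (f (\<gamma> s')) \<le> d' (f (\<gamma> s)) (f (\<gamma> u)) + d' (f (\<gamma> u)) (f (\<gamma> s'))"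
      using Metric_space.triangle[OF d'] by simp
    ultimately show "?P s s'"
      using su us by (simp add: algebra_simps)
  qed
  moreover have "\<exists>s\<in>{a..b}. \<exists>t\<in>{a..b}. (f \<circ> \<gamma>) s \<noteq> (f \<circ> \<gamma>) t"
    using \<gamma> \<open>inj f\<close> unfolding fd_curve_def by (auto dest: injD)
  ultimately show ?thesis
    by (intro fd_curveI_ordered[OF d' ab, of _ _ K]) auto
qed

theorem proposition4p11:
  fixes d :: "'a \<Rightarrow> 'a \<Rightarrow> real" and ll le :: "'a \<Rightarrow> 'a \<Rightarrow> bool" and tau :: "'a \<Rightarrow> 'a \<Rightarrow> ennreal"
    and d' :: "'b \<Rightarrow> 'b \<Rightarrow> real" and ll' le' :: "'b \<Rightarrow> 'b \<Rightarrow> bool" and tau' :: "'b \<Rightarrow> 'b \<Rightarrow> ennreal"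
    and f :: "'a \<Rightarrow> 'b" and \<gamma> :: "real \<Rightarrow> 'a" and a b :: real and x y :: 'a
  assumes X: "lorentzian_length_space d ll le tau"
    and Y: "lorentzian_length_space d' ll' le' tau'"
    and surj: "surj f"
    and hom: "distance_homothetic tau tau' f"
    and lip: "locally_causally_lipschitz d le d' f"
    and sc: "strongly_causal d ll"
    and lc: "locally_compact_space (mtop UNIV d')"
    and xy: "le x y"
    and cur: "curve_from_to d le a b \<gamma> x y"
    and maxi: "Ltau tau a b \<gamma> = tau x y"
  shows "curve_from_to d' le' a b (f \<circ> \<gamma>) (f x) (f y) \<and>
         Ltau tau' a b (f \<circ> \<gamma>) = tau' (f x) (f y)"
proof
  note X' = lls_lpls[OF X] and Y' = lls_lpls[OF Y]
  have "inj f"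
    using distance_homothetic_inj[OF X' sc hom lpls_tau_pos_iff[OF Y']] .
  moreover have "fd_curve d le a b \<gamma>"
    using cur unfolding curve_from_to_def by blast
  ultimately have "fd_curve d' le' a b (f \<circ> \<gamma>)"
    by (intro fd_curve_comp_locally_causal_lipschitz[OF lpls_metric[OF X'] lpls_metric[OF Y']
        lpls_le_refl[OF X'] lpls_le_trans[OF Y'] homothetic_locally_causal_lipschitz[OF X Y hom lip sc]])
  with cur show "curve_from_to d' le' a b (f \<circ> \<gamma>) (f x) (f y)"
    unfolding curve_from_to_def by simp
  show "Ltau tau' a b (f \<circ> \<gamma>) = tau' (f x) (f y)"
    using distance_homothetic_Ltau[OF hom maxi] .
qed

end
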